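(* Let $p\geq 5$ be a prime, $q=2(p-1)$, and let $m,n,s,r$ be integers with $n\geq m+2>5$, $2\leq s<p$ and $1\leq r\leq s+3$. Put $t(s)=q(p^n+p^m+sp+s)$. Then in the May spectral sequence, $$E_1^{s+3-r,\,t(s)+s-r-1,\,*}=\begin{cases}\mathbb{Z}_p\{\mathbf{g}_1,\dots,\mathbf{g}_7\} & \text{if } r=1 \text{ and } s=p-1,\\ 0 & \text{otherwise,}\end{cases}$$ where $\mathbf{g}_1=a_n^{p-3}h_{3,0}h_{1,m}h_{n-2,2}h_{n,0}$, $\mathbf{g}_2=a_n^{p-3}h_{1,2}h_{m+1,0}h_{n-m,m}h_{n,0}$, $\mathbf{g}_3=a_{m+1}a_n^{p-4}h_{3,0}h_{n-m,m}h_{n-2,2}h_{n,0}$, $\mathbf{g}_4=a_n^{p-3}h_{3,0}h_{m-1,2}h_{n-m,m}h_{n,0}$, $\mathbf{g}_5=a_n^{p-3}h_{3,0}h_{m+1,0}h_{n-m,m}h_{n-2,2}$, $\mathbf{g}_6=a_3a_n^{p-4}h_{m+1,0}h_{n-m,m}h_{n-2,2}h_{n,0}$, $\mathbf{g}_7=a_m^{p-3}h_{3,0}h_{m,0}h_{m-2,2}h_{1,n}$.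
   Context: The May spectral sequence $\{E_r^{s,t,u},d_r\}$ (for the mod $p$ Steenrod algebra $A$, $p$ odd) converges to $\mathrm{Ext}_A^{s,t}(\mathbb{Z}_p,\mathbb{Z}_p)$ and has $E_1^{*,*,*}=E(h_{i,j}\mid i>0,j\geq 0)\otimes P(b_{i,j}\mid i>0,j\geq 0)\otimes P(a_k\mid k\geq 0)$ ($E$ exterior, $P$ polynomial), with $h_{i,j}\in E_1^{1,2(p^i-1)p^j,2i-1}$, $b_{i,j}\in E_1^{2,2(p^i-1)p^{j+1},p(2i-1)}$, $a_k\in E_1^{1,2p^k-1,2k+1}$; the $h_{i,j}$ anticommute with one another and all other pairs of generators commute. $E_1^{s,t,*}$ denotes the direct sum over all values of the third index. *)

theory Defs
  imports Main "HOL-Library.Multiset" "HOL-Computational_Algebra.Primes"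
begin

text \<open>A monomial is a triple (H, B, A): H is the (finite) set of exterior generators
  h_{i,j} occurring (each with exponent 0 or 1), B the multiset of polynomial
  generators b_{i,j}, A the multiset of polynomial generators a_k.
  Up to sign, these monomials form a Z_p-basis of E_1, and E_1^{s,t,*} is the
  Z_p-span of the monomials of internal bidegree (s,t).\<close>

type_synonym may_mono = "(nat \<times> nat) set \<times> (nat \<times> nat) multiset \<times> nat multiset"

definition valid_mono :: "may_mono \<Rightarrow> bool" where
  "valid_mono M = (case M of (H, B, A) \<Rightarrow>
      finite H \<and> (\<forall>(i,j)\<in>H. i > 0) \<and> (\<forall>(i,j)\<in>#B. i > 0))"

definition s_deg :: "may_mono \<Rightarrow> nat" where
  "s_deg M = (case M of (H, B, A) \<Rightarrow> card H + 2 * size B + size A)"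

definition t_deg :: "nat \<Rightarrow> may_mono \<Rightarrow> nat" where
  "t_deg p M = (case M of (H, B, A) \<Rightarrow>
      (\<Sum>(i,j)\<in>H. 2 * (p^i - 1) * p^j)
    + sum_mset (image_mset (\<lambda>(i,j). 2 * (p^i - 1) * p^(j+1)) B)
    + sum_mset (image_mset (\<lambda>k. 2 * p^k - 1) A))"

definition E1_basis :: "nat \<Rightarrow> nat \<Rightarrow> nat \<Rightarrow> may_mono set" where
  "E1_basis p s t = {M. valid_mono M \<and> s_deg M = s \<and> t_deg p M = t}"

definition g1 :: "nat \<Rightarrow> nat \<Rightarrow> nat \<Rightarrow> may_mono" where
  "g1 p m n = ({(3,0),(1,m),(n-2,2),(n,0)}, {#}, replicate_mset (p-3) n)"
definition g2 :: "nat \<Rightarrow> nat \<Rightarrow> nat \<Rightarrow> may_mono" where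
  "g2 p m n = ({(1,2),(m+1,0),(n-m,m),(n,0)}, {#}, replicate_mset (p-3) n)"
definition g3 :: "nat \<Rightarrow> nat \<Rightarrow> nat \<Rightarrow> may_mono" where
  "g3 p m n = ({(3,0),(n-m,m),(n-2,2),(n,0)}, {#}, add_mset (m+1) (replicate_mset (p-4) n))"
definition g4 :: "nat \<Rightarrow> nat \<Rightarrow> nat \<Rightarrow> may_mono" where
  "g4 p m n = ({(3,0),(m-1,2),(n-m,m),(n,0)}, {#}, replicate_mset (p-3) n)"
definition g5 :: "nat \<Rightarrow> nat \<Rightarrow> nat \<Rightarrow> may_mono" where
  "g5 p m n = ({(3,0),(m+1,0),(n-m,m),(n-2,2)}, {#}, replicate_mset (p-3) n)"
definition g6 :: "nat \<Rightarrow> nat \<Rightarrow> nat \<Rightarrow> may_mono" where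
  "g6 p m n = ({(m+1,0),(n-m,m),(n-2,2),(n,0)}, {#}, add_mset 3 (replicate_mset (p-4) n))"
definition g7 :: "nat \<Rightarrow> nat \<Rightarrow> nat \<Rightarrow> may_mono" where
  "g7 p m n = ({(3,0),(m,0),(m-2,2),(1,n)}, {#}, replicate_mset (p-3) m)"

end

(*
  Write every internal degree in base p: h_{i,j} has degree 2(p^{i+j} - p^j), b_{i,j} has
  2(p^{i+j+1} - p^{j+1}) and a_k has 2p^k - 1. As p^k = 1 mod p - 1, the t-degree is congruent to
  the number of factors a_k modulo 2(p-1), which fixes that number; the s-degree then leaves
  weight four for the factors h_{i,j} and b_{i,j}. What remains of the t-degree condition is an
  equality between two sums of powers of p. Its right-hand side has a single base-p digit that is
  too large, namely at p^2, so the left-hand side must carry exactly once; the carry can only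
  happen at p^n or p^m, which forces r = 1, s = p - 1 and leaves exactly the seven monomials.
*)

theory Submission
  imports Defs
begin

definition padic_sum :: "nat \<Rightarrow> nat multiset \<Rightarrow> nat" where
  "padic_sum p M = (\<Sum>x\<in>#M. p ^ x)"

definition carry_free :: "nat \<Rightarrow> nat multiset \<Rightarrow> bool" where
  "carry_free p M \<longleftrightarrow> (\<forall>x. count M x < p)"

definition carry :: "nat \<Rightarrow> nat \<Rightarrow> nat multiset \<Rightarrow> nat multiset" where
  "carry p x M = add_mset (Suc x) (M - replicate_mset p x)"

definition shift_down :: "nat multiset \<Rightarrow> nat multiset" where
  "shift_down M = image_mset (\<lambda>x. x - 1) (filter_mset (\<lambda>x. 0 < x) M)"

lemma padic_sum_empty [simp]: "padic_sum p {#} = 0"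
  by (simp add: padic_sum_def)

lemma padic_sum_add_mset [simp]: "padic_sum p (add_mset x M) = p ^ x + padic_sum p M"
  by (simp add: padic_sum_def)

lemma padic_sum_union [simp]: "padic_sum p (M + N) = padic_sum p M + padic_sum p N"
  by (simp add: padic_sum_def)

lemma padic_sum_replicate_mset [simp]: "padic_sum p (replicate_mset k x) = k * p ^ x"
  by (induction k) simp_all

lemma size_le_padic_sum: "0 < p \<Longrightarrow> size M \<le> padic_sum p M"
proof (induction M)
  case (add x M)
  then have "size M \<le> padic_sum p M" "0 < p ^ x" by simp_all
  then show ?case by (simp only: padic_sum_add_mset size_add_mset)
qed simp

lemma count_shift_down [simp]: "count (shift_down M) y = count M (Suc y)"
  by (induction M) (auto simp: shift_down_def)

lemma padic_sum_shift_down: "padic_sum p M = count M 0 + p * padic_sum p (shift_down M)"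
proof (induction M)
  case (add x M)
  then show ?case
    by (cases x) (simp_all add: shift_down_def padic_sum_def algebra_simps)
qed (simp add: shift_down_def)

lemma padic_sum_mod: "padic_sum p M mod p = count M 0 mod p"
  using padic_sum_shift_down[of p M] by simp

lemma carry_free_padic_sum_inj:
  assumes "1 < p" "carry_free p M" "carry_free p N" "padic_sum p M = padic_sum p N"
  shows "M = N"
  using assms(2-)
proof (induction "padic_sum p M" arbitrary: M N rule: less_induct)
  case less
  have zero: "count M 0 = count N 0"
    using padic_sum_mod[of p M] padic_sum_mod[of p N] less.prems unfolding carry_free_def by simp
  show ?case
  proof (cases "padic_sum p M = 0")
    case True
    then show ?thesis
      using size_le_padic_sum[of p M] size_le_padic_sum[of p N] less.prems(3) assms(1) by simp
  next
    case False
    have "padic_sum p (shift_down M) < p * padic_sum p (shift_down M) \<or> padic_sum p (shift_down M) = 0"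
      using assms(1) by auto
    then have "padic_sum p (shift_down M) < padic_sum p M"
      using False padic_sum_shift_down[of p M] by linarith
    moreover have "padic_sum p (shift_down M) = padic_sum p (shift_down N)"
      using padic_sum_shift_down[of p M] padic_sum_shift_down[of p N] zero less.prems(3) assms(1) by simp
    moreover have "carry_free p (shift_down M)" "carry_free p (shift_down N)"
      using less.prems by (simp_all add: carry_free_def)
    ultimately have "shift_down M = shift_down N"
      using less.hyps by blast
    then have "count M (Suc y) = count N (Suc y)" for y
      by (metis count_shift_down)
    then show ?thesis
      using zero by (metis multiset_eqI not0_implies_Suc)
  qed
qed

lemma
  assumes "p \<le> count M x"
  shows padic_sum_carry: "padic_sum p (carry p x M) = padic_sum p M"
    and size_carry: "size (carry p x M) + p = size M + 1"
    and carry_plus_replicate: "carry p x M + replicate_mset p x = add_mset (Suc x) M"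
proof -
  have M: "M = (M - replicate_mset p x) + replicate_mset p x"
    using assms by (simp add: subseteq_mset_def)
  show "carry p x M + replicate_mset p x = add_mset (Suc x) M"
    by (subst (2) M) (simp add: carry_def)
  then have "padic_sum p (carry p x M) + p * p ^ x = p ^ Suc x + padic_sum p M"
    "size (carry p x M) + p = size (add_mset (Suc x) M)"
    by (metis padic_sum_union padic_sum_add_mset padic_sum_replicate_mset,
        metis size_union size_replicate_mset)
  then show "padic_sum p (carry p x M) = padic_sum p M" "size (carry p x M) + p = size M + 1"
    by simp_all
qed

lemma carry_free_size_minimal:
  assumes "1 < p" "carry_free p N" "padic_sum p M = padic_sum p N"
  shows "size N \<le> size M"
  using assms(3)
proof (induction "size M" arbitrary: M rule: less_induct)
  case less
  show ?case
  proof (cases "carry_free p M")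
    case True
    then show ?thesis
      using carry_free_padic_sum_inj[OF assms(1) True assms(2) less.prems] by simp
  next
    case False
    then obtain x where x: "p \<le> count M x"
      by (auto simp: carry_free_def not_less)
    have "size N \<le> size (carry p x M)"
      using less.hyps[of "carry p x M"] size_carry[OF x] padic_sum_carry[OF x] less.prems assms(1)
      by simp
    then show ?thesis
      using size_carry[OF x] assms(1) by simp
  qed
qed

lemma padic_sum_eq_carry_free:
  assumes "1 < p" "size L = size R" "padic_sum p L = padic_sum p R" "carry_free p R"
  shows "L = R"
proof (cases "carry_free p L")
  case True
  then show ?thesis
    using carry_free_padic_sum_inj assms by blast
next
  case False
  then obtain x where x: "p \<le> count L x"
    by (auto simp: carry_free_def not_less)
  have "size R \<le> size (carry p x L)"
    using carry_free_size_minimal[OF assms(1,4)] padic_sum_carry[OF x] assms(3) by simp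
  then show ?thesis
    using size_carry[OF x] assms by simp
qed

lemma padic_sum_eq_single_carry:
  assumes "1 < p" "size L = size R" "padic_sum p L = padic_sum p R"
    and "p \<le> count R y" "carry_free p (carry p y R)"
  obtains x where "p \<le> count L x"
    "add_mset (Suc x) L + replicate_mset p y = add_mset (Suc y) R + replicate_mset p x"
proof -
  have "\<not> carry_free p L"
  proof
    assume "carry_free p L"
    then have "L = carry p y R"
      using carry_free_padic_sum_inj[OF assms(1) _ assms(5)] padic_sum_carry[OF assms(4)] assms(3)
      by simp
    then show False
      using size_carry[OF assms(4)] assms(1,2) by simp
  qed
  then obtain x where x: "p \<le> count L x"
    by (auto simp: carry_free_def not_less)
  have "carry p x L = carry p y R"
    using padic_sum_eq_carry_free[OF assms(1) _ _ assms(5)] size_carry[OF x] size_carry[OF assms(4)]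
      padic_sum_carry[OF x] padic_sum_carry[OF assms(4)] assms(2,3)
    by simp
  then have "carry p x L + replicate_mset p x + replicate_mset p y
      = carry p y R + replicate_mset p y + replicate_mset p x"
    by (simp add: add_ac)
  then show thesis
    using that[OF x] carry_plus_replicate[OF x] carry_plus_replicate[OF assms(4)] by simp
qed

text \<open>The exponents \<open>j\<close> and \<open>i + j\<close> of the two powers of \<open>p\<close> in the degree of \<open>h\<^sub>i\<^sub>,\<^sub>j\<close>,
  and \<open>j + 1\<close> and \<open>i + j + 1\<close> for \<open>b\<^sub>i\<^sub>,\<^sub>j\<close>.\<close>

definition start_exps :: "(nat \<times> nat) set \<Rightarrow> (nat \<times> nat) multiset \<Rightarrow> nat multiset" where
  "start_exps H B = image_mset snd (mset_set H) + image_mset (\<lambda>(i, j). Suc j) B"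

definition end_exps :: "(nat \<times> nat) set \<Rightarrow> (nat \<times> nat) multiset \<Rightarrow> nat multiset" where
  "end_exps H B = image_mset (\<lambda>(i, j). i + j) (mset_set H) + image_mset (\<lambda>(i, j). Suc (i + j)) B"

lemma size_start_exps: "finite H \<Longrightarrow> size (start_exps H B) = card H + size B"
  by (simp add: start_exps_def)

lemma size_end_exps: "finite H \<Longrightarrow> size (end_exps H B) = card H + size B"
  by (simp add: end_exps_def)

lemma power_pred_mult_add_eq: "0 < p \<Longrightarrow> 2 * (p ^ i - 1) * p ^ j + 2 * p ^ j = 2 * (p ^ (i + j) :: nat)"
  by (cases "p ^ i") (simp_all add: power_add)

lemma t_deg_padic_sum:
  assumes "0 < p" "finite H"
  shows "t_deg p (H, B, A) + 2 * padic_sum p (start_exps H B) + size A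
    = 2 * padic_sum p (end_exps H B) + 2 * padic_sum p A"
proof -
  have h: "(\<Sum>(i, j)\<in>#P. 2 * (p ^ i - 1) * p ^ j) + 2 * padic_sum p (image_mset snd P)
      = 2 * padic_sum p (image_mset (\<lambda>(i, j). i + j) P)" for P
  proof (induction P)
    case (add x P)
    obtain i j where "x = (i, j)" by force
    with add.IH power_pred_mult_add_eq[OF assms(1), of i j] show ?case by simp
  qed simp
  have b: "(\<Sum>(i, j)\<in>#B. 2 * (p ^ i - 1) * p ^ (j + 1))
      + 2 * padic_sum p (image_mset (\<lambda>(i, j). Suc j) B)
      = 2 * padic_sum p (image_mset (\<lambda>(i, j). Suc (i + j)) B)"
  proof (induction B)
    case (add x B)
    obtain i j where "x = (i, j)" by force
    with add.IH power_pred_mult_add_eq[OF assms(1), of i "Suc j"] show ?case by simp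
  qed simp
  have a: "(\<Sum>k\<in>#A. 2 * p ^ k - 1) + size A = 2 * padic_sum p A"
  proof (induction A)
    case (add k A)
    obtain l where "p ^ k = Suc l" using assms(1) by (cases "p ^ k") simp_all
    with add.IH show ?case by simp
  qed simp
  show ?thesis
    using h[of "mset_set H"] b a
    by (simp add: t_deg_def start_exps_def end_exps_def sum_unfold_sum_mset)
qed

lemma padic_sum_eq_size_plus_multiple: obtains k where "padic_sum (Suc q) M = size M + q * k"
proof -
  have "\<exists>k. Suc q ^ x = 1 + q * k" for x
  proof (induction x)
    case (Suc x)
    then obtain k where "Suc q ^ x = 1 + q * k" by blast
    then have "Suc q ^ Suc x = 1 + q * (1 + Suc q * k)"
      by (simp add: algebra_simps)
    then show ?case by blast
  qed simp
  then have "\<exists>k. padic_sum (Suc q) M = size M + q * k"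
  proof (induction M)
    case (add x M)
    then obtain k l where "padic_sum (Suc q) M = size M + q * k" "Suc q ^ x = 1 + q * l"
      by blast
    then have "padic_sum (Suc q) (add_mset x M) = size (add_mset x M) + q * (k + l)"
      by (simp add: algebra_simps)
    then show ?case by blast
  qed simp
  then show thesis using that by blast
qed

lemma t_deg_mod:
  assumes "finite H"
  shows "t_deg (Suc q) (H, B, A) mod (2 * q) = size A mod (2 * q)"
proof -
  obtain kS where kS: "padic_sum (Suc q) (start_exps H B) = size (start_exps H B) + q * kS"
    using padic_sum_eq_size_plus_multiple .
  obtain kE where kE: "padic_sum (Suc q) (end_exps H B) = size (end_exps H B) + q * kE"
    using padic_sum_eq_size_plus_multiple .
  obtain kA where kA: "padic_sum (Suc q) A = size A + q * kA"
    using padic_sum_eq_size_plus_multiple .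
  have "t_deg (Suc q) (H, B, A) + 2 * q * kS = size A + 2 * q * (kE + kA)"
    using t_deg_padic_sum[OF _ assms, of "Suc q" B A] kS kE kA
      size_start_exps[OF assms] size_end_exps[OF assms]
    by (simp add: algebra_simps)
  then have "(t_deg (Suc q) (H, B, A) + 2 * q * kS) mod (2 * q) = (size A + 2 * q * (kE + kA)) mod (2 * q)"
    by simp
  then show ?thesis
    by simp
qed

text \<open>With \<open>|A| + r + 1 = s\<close>, the \<open>t\<close>-degree condition is twice an identity between \<open>p\<close>-adic sums in
  which all subtracted powers have been moved to the other side.\<close>

lemma t_deg_eq_iff_padic_sum_eq:
  assumes "0 < p" "finite H" "size A + r + 1 = s"
  shows "t_deg p (H, B, A) + r + 1 = 2 * (p - 1) * (p ^ n + p ^ m + s * p + s) + s \<longleftrightarrow>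
    padic_sum p (A + end_exps H B + {#n, m#} + replicate_mset (Suc r) 0)
      = padic_sum p ({#Suc n, Suc m#} + replicate_mset s 2 + start_exps H B)"
proof -
  obtain q where p: "p = Suc q" using assms(1) by (cases p) simp_all
  have "2 * (p - 1) * (p ^ n + p ^ m + s * p + s) + 2 * (p ^ n + p ^ m) + 2 * s
      = 2 * (p * p ^ n + p * p ^ m + s * p\<^sup>2)"
    unfolding p by (simp add: algebra_simps power2_eq_square)
  then show ?thesis
    using t_deg_padic_sum[OF assms(1,2), of B A] assms(3) by simp linarith
qed

lemma bidegree_forces_size:
  assumes "5 \<le> p" "0 < s" "s < p" "r \<le> s + 3" "finite H"
    and "s_deg (H, B, A) = s + 3 - r"
    and "t_deg p (H, B, A) + r + 1 = 2 * (p - 1) * X + s"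
  shows "size A + r + 1 = s"
proof -
  obtain q where p: "p = Suc q" using assms(1) by (cases p) simp_all
  have "(size A + (r + 1)) mod (2 * q) = (t_deg p (H, B, A) + (r + 1)) mod (2 * q)"
    using t_deg_mod[OF assms(5), of q B A] unfolding p by (metis mod_add_left_eq)
  also have "\<dots> = s"
    using assms(1,3,7) unfolding p by simp
  finally have eq: "(size A + (r + 1)) mod (2 * q) = s" .
  moreover have "size A + (r + 1) \<le> 2 * q"
    using assms(1,3,4,6) unfolding p s_deg_def by simp
  moreover have "size A + (r + 1) \<noteq> 2 * q"
    using eq assms(2) by auto
  ultimately show ?thesis
    by simp
qed

lemma E1_bidegree_iff:
  assumes "5 \<le> p" "2 \<le> s" "s < p" "1 \<le> r" "r \<le> s + 3" "finite H"
  shows "s_deg (H, B, A) = s + 3 - r \<and>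
      t_deg p (H, B, A) = 2 * (p - 1) * (p ^ n + p ^ m + s * p + s) + s - r - 1
    \<longleftrightarrow> size A + r + 1 = s \<and> card H + 2 * size B = 4 \<and>
      padic_sum p (A + end_exps H B + {#n, m#} + replicate_mset (Suc r) 0)
        = padic_sum p ({#Suc n, Suc m#} + replicate_mset s 2 + start_exps H B)"
proof -
  have "8 * s \<le> 2 * (p - 1) * (p ^ n + p ^ m + s * p + s)"
    using assms(1) by (intro mult_le_mono) simp_all
  then have t_deg_iff: "t_deg p (H, B, A) = 2 * (p - 1) * (p ^ n + p ^ m + s * p + s) + s - r - 1
    \<longleftrightarrow> t_deg p (H, B, A) + r + 1 = 2 * (p - 1) * (p ^ n + p ^ m + s * p + s) + s"
    using assms(2,5) by linarith
  have s_deg_iff: "s_deg (H, B, A) = s + 3 - r \<longleftrightarrow> card H + 2 * size B = 4"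
    if "size A + r + 1 = s"
    using that by (auto simp: s_deg_def)
  have p_pos: "0 < p" and s_pos: "0 < s"
    using assms(1,2) by simp_all
  show ?thesis
    using bidegree_forces_size[OF assms(1) s_pos assms(3,5,6)] t_deg_iff s_deg_iff
      t_deg_eq_iff_padic_sum_eq[OF p_pos assms(6)] by blast
qed

lemma image_mset_eq_four:
  assumes "image_mset f M = {#w, x, y, z#}"
  obtains a b c d where "M = {#a, b, c, d#}" "f a = w" "f b = x" "f c = y" "f d = z"
proof -
  obtain M1 a where 1: "M = add_mset a M1" "f a = w" "image_mset f M1 = {#x, y, z#}"
    using msed_map_invR[OF assms] by blast
  obtain M2 b where 2: "M1 = add_mset b M2" "f b = x" "image_mset f M2 = {#y, z#}"
    using msed_map_invR[OF 1(3)] by blast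
  obtain M3 c where 3: "M2 = add_mset c M3" "f c = y" "image_mset f M3 = {#z#}"
    using msed_map_invR[OF 2(3)] by blast
  obtain M4 d where 4: "M3 = add_mset d M4" "f d = z" "image_mset f M4 = {#}"
    using msed_map_invR[OF 3(3)] by blast
  show thesis
    using that[of a b c d] 1 2 3 4 by simp
qed

text \<open>Here \<open>a \<noteq> b\<close> because \<open>H\<close> is a set, so \<open>a < b\<close> after possibly swapping them.\<close>

lemma start_exps_shape:
  assumes "finite H" "card H + 2 * size B = 4" "{#0, 0, y, z#} \<subseteq># start_exps H B"
  obtains a b c d where "B = {#}" "a < b" "H = {(a, 0), (b, 0), (c, y), (d, z)}"
    "start_exps H B = {#0, 0, y, z#}" "end_exps H B = {#a, b, c + y, d + z#}"
proof -
  have "4 \<le> card H + size B"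
    using size_mset_mono[OF assms(3)] size_start_exps[OF assms(1)] by simp
  then have B: "B = {#}"
    using assms(2) size_eq_0_iff_empty[of B] by linarith
  have "size (start_exps H B) = size {#0, 0, y, z#}"
    using size_start_exps[OF assms(1)] assms(2) B by simp
  then have "\<not> {#0, 0, y, z#} \<subset># start_exps H B"
    using mset_subset_size by (metis less_irrefl)
  then have S: "start_exps H B = {#0, 0, y, z#}"
    using assms(3) by (simp add: subset_mset.le_less)
  then have "image_mset snd (mset_set H) = {#0, 0, y, z#}"
    using B by (simp add: start_exps_def)
  then obtain u1 u2 u3 u4 where H: "mset_set H = {#u1, u2, u3, u4#}"
    and snd: "snd u1 = 0" "snd u2 = 0" "snd u3 = y" "snd u4 = z"
    by (rule image_mset_eq_four)
  then obtain a b c d where u: "u1 = (a, 0)" "u2 = (b, 0)" "u3 = (c, y)" "u4 = (d, z)"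
    by (metis prod.collapse)
  have "count (mset_set H) u1 \<le> 1"
    by (simp add: count_mset_set')
  then have "a \<noteq> b"
    using H u by auto
  moreover have H_eq: "H = {(a, 0), (b, 0), (c, y), (d, z)}"
    using H u assms(1) by (metis finite_set_mset_mset_set set_mset_add_mset_insert set_mset_empty)
  moreover have "end_exps H B = {#a, b, c + y, d + z#}"
    using H u B by (simp add: end_exps_def)
  ultimately show thesis
    using that[of a b c d] that[of b a c d] B S
    by (cases "a < b") (simp_all add: insert_commute add_mset_commute)
qed

lemma carry_at_n_solutions:
  assumes eq: "A + {#a, b, c + 2, d + m#} = add_mset (Suc m) (add_mset 3 (replicate_mset (p - 1) n))"
    and "a < b" "0 < c" "0 < d" "4 \<le> m" "m + 2 \<le> n" "5 \<le> p"
  shows "({(a, 0), (b, 0), (c, 2), (d, m)}, {#}, A)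
    \<in> {g1 p m n, g2 p m n, g3 p m n, g4 p m n, g5 p m n, g6 p m n}"
proof -
  let ?T = "add_mset (Suc m) (add_mset 3 (replicate_mset (p - 1) n))"
  let ?E = "{#a, b, c + 2, d + m#}"
  have A: "A = ?T - ?E"
    using eq by (metis add_diff_cancel_right')
  have "count ?E v \<le> count ?T v" for v
    using eq by (metis count_union le_add2)
  from this[of 3] this[of "Suc m"] have E3: "count ?E 3 \<le> 1" and Em: "count ?E (Suc m) \<le> 1"
    using assms(5,6) by simp_all
  have "a \<in># ?T" "b \<in># ?T" "c + 2 \<in># ?T" "d + m \<in># ?T"
    using eq by (metis union_iff add_mset_add_single insertCI set_mset_add_mset_insert)+
  then have ab: "a = 3 \<and> b = Suc m \<or> a = 3 \<and> b = n \<or> a = Suc m \<and> b = n"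
    and c: "c = 1 \<or> c = m - 1 \<or> c = n - 2" and d: "d = 1 \<or> d = n - m"
    using assms(2-6) by (auto split: if_splits)
  obtain k where p: "p = k + 5"
    using assms(7) by (metis add.commute le_Suc_ex)
  have "n - 2 + 2 = n" "n - m + m = n" "m - 1 + 2 = Suc m"
    using assms(5,6) by simp_all
  with ab c d show ?thesis
    using E3 Em A p assms(5,6)
    by (elim disjE conjE)
      (simp_all add: g1_def g2_def g3_def g4_def g5_def g6_def numeral_eq_Suc insert_commute)
qed

lemma carry_at_m_solution:
  assumes eq: "A + {#a, b, c + 2, d + n#} = add_mset (Suc n) (add_mset 3 (replicate_mset (p - 1) m))"
    and "a < b" "0 < c" "0 < d" "4 \<le> m" "m + 2 \<le> n" "5 \<le> p"
  shows "({(a, 0), (b, 0), (c, 2), (d, n)}, {#}, A) = g7 p m n"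
proof -
  let ?T = "add_mset (Suc n) (add_mset 3 (replicate_mset (p - 1) m))"
  let ?E = "{#a, b, c + 2, d + n#}"
  have A: "A = ?T - ?E"
    using eq by (metis add_diff_cancel_right')
  have "count ?E v \<le> count ?T v" for v
    using eq by (metis count_union le_add2)
  from this[of 3] this[of "Suc n"] have E3: "count ?E 3 \<le> 1" and En: "count ?E (Suc n) \<le> 1"
    using assms(5,6) by simp_all
  have "a \<in># ?T" "b \<in># ?T" "c + 2 \<in># ?T" "d + n \<in># ?T"
    using eq by (metis union_iff add_mset_add_single insertCI set_mset_add_mset_insert)+
  then have ab: "a = 3 \<and> b = m \<or> a = 3 \<and> b = Suc n \<or> a = m \<and> b = Suc n"
    and c: "c = 1 \<or> c = m - 2 \<or> c = n - 1" and d: "d = 1"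
    using assms(2-6) by (auto split: if_splits)
  obtain k where p: "p = k + 5"
    using assms(7) by (metis add.commute le_Suc_ex)
  have "m - 2 + 2 = m" "n - 1 + 2 = Suc n"
    using assms(5,6) by simp_all
  with ab c d show ?thesis
    using E3 En A p assms(5,6)
    by (elim disjE conjE) (simp_all add: g7_def numeral_eq_Suc insert_commute)
qed

lemma no_carry_no_solution:
  assumes eq: "A + {#a, b, c + m, d + n#} = {#Suc n, Suc m#} + replicate_mset s 2"
    and "a < b" "0 < c" "0 < d" "4 \<le> m" "m + 2 \<le> n"
  shows False
proof -
  let ?T = "{#Suc n, Suc m#} + replicate_mset s 2"
  let ?E = "{#a, b, c + m, d + n#}"
  have "count ?E v \<le> count ?T v" for v
    using eq by (metis count_union le_add2)
  from this[of "Suc n"] this[of "Suc m"] have En: "count ?E (Suc n) \<le> 1" and Em: "count ?E (Suc m) \<le> 1"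
    using assms(5,6) by simp_all
  have "a \<in># ?T" "b \<in># ?T" "c + m \<in># ?T" "d + n \<in># ?T"
    using eq by (metis union_iff add_mset_add_single insertCI set_mset_add_mset_insert)+
  then have ab: "a = 2 \<and> b = Suc m \<or> a = 2 \<and> b = Suc n \<or> a = Suc m \<and> b = Suc n"
    and c: "c = 1 \<or> c = Suc n - m" and d: "d = 1"
    using assms(2-6) by (auto split: if_splits)
  have "Suc n - m + m = Suc n"
    using assms(6) by simp
  with ab c d show False
    using En Em assms(5,6)
    by (elim disjE conjE) simp_all
qed

locale digit_equation =
  fixes p m n s r :: nat and H :: "(nat \<times> nat) set" and B :: "(nat \<times> nat) multiset"
    and A :: "nat multiset"
  assumes p_ge: "5 \<le> p" and m_ge: "4 \<le> m" and n_ge: "m + 2 \<le> n" and s_less: "s < p"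
    and r_ge: "1 \<le> r" and finite_H: "finite H" and H_pos: "\<forall>(i, j)\<in>H. 0 < i"
    and size_A: "size A + r + 1 = s" and card_H: "card H + 2 * size B = 4"
    and padic_eq: "padic_sum p (A + end_exps H B + {#n, m#} + replicate_mset (Suc r) 0)
      = padic_sum p ({#Suc n, Suc m#} + replicate_mset s 2 + start_exps H B)"
begin

abbreviation lhs :: "nat multiset" where
  "lhs \<equiv> A + end_exps H B + {#n, m#} + replicate_mset (Suc r) 0"

abbreviation rhs :: "nat multiset" where
  "rhs \<equiv> {#Suc n, Suc m#} + replicate_mset s 2 + start_exps H B"

lemma one_less_p: "1 < p"
  using p_ge by simp

lemma size_start_exps_le: "size (start_exps H B) \<le> 4"
  using size_start_exps[OF finite_H] card_H by simp

lemma size_lhs_eq_size_rhs: "size lhs = size rhs"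
  using size_A size_start_exps[OF finite_H] size_end_exps[OF finite_H] by simp

lemma count_lhs_zero: "count lhs 0 = count A 0 + r + 1"
proof -
  have "0 \<notin># end_exps H B"
    using H_pos finite_H by (auto simp: end_exps_def)
  then show ?thesis
    using m_ge n_ge by (simp add: not_in_iff)
qed

lemma count_start_exps_zero: "count (start_exps H B) 0 = count A 0 + r + 1"
proof -
  have "count lhs 0 = count A 0 + r + 1"
    by (rule count_lhs_zero)
  moreover have "count A 0 + r + 1 < p"
    using count_le_size[of A 0] size_A s_less by simp
  moreover have "count (start_exps H B) 0 < p"
    using count_le_size[of "start_exps H B" 0] size_start_exps_le p_ge by simp
  ultimately show ?thesis
    using padic_sum_mod[of p lhs] padic_sum_mod[of p rhs] padic_eq by simp
qed

lemma count_start_exps_le: "y \<noteq> 0 \<Longrightarrow> count (start_exps H B) y \<le> 2"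
proof -
  assume "y \<noteq> 0"
  then have "replicate_mset (count (start_exps H B) y) y + replicate_mset (count (start_exps H B) 0) 0
      \<subseteq># start_exps H B"
    by (auto simp: subseteq_mset_def)
  from size_mset_mono[OF this] show ?thesis
    using size_start_exps_le count_start_exps_zero r_ge by simp
qed

lemma rhs_not_carry_free: "\<not> carry_free p rhs"
proof
  assume "carry_free p rhs"
  with one_less_p size_lhs_eq_size_rhs padic_eq have eq: "lhs = rhs"
    by (rule padic_sum_eq_carry_free)
  then have "n \<in># rhs" "m \<in># rhs"
    by (metis union_iff insert_iff set_mset_add_mset_insert)+
  then have "{#0, 0, m, n#} \<subseteq># start_exps H B"
    using count_start_exps_zero r_ge m_ge n_ge by (auto simp: subseteq_mset_def split: if_splits)
  then obtain a b c d where "B = {#}" "a < b" and H: "H = {(a, 0), (b, 0), (c, m), (d, n)}"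
    and S: "start_exps H B = {#0, 0, m, n#}" and E: "end_exps H B = {#a, b, c + m, d + n#}"
    using start_exps_shape[OF finite_H card_H] by blast
  have "r = 1"
    using count_start_exps_zero S r_ge m_ge n_ge by simp
  then have "A + {#a, b, c + m, d + n#} = {#Suc n, Suc m#} + replicate_mset s 2"
    using eq S E by simp
  moreover have "0 < c" "0 < d"
    using H_pos H by auto
  ultimately show False
    using no_carry_no_solution \<open>a < b\<close> m_ge n_ge by blast
qed

lemma count_rhs_two: "p \<le> count rhs 2"
proof (rule ccontr)
  assume two: "\<not> p \<le> count rhs 2"
  have "count rhs y < p" for y
  proof (cases "y = 0 \<or> y = 2")
    case True
    then show ?thesis
      using two count_le_size[of "start_exps H B" 0] size_start_exps_le p_ge by auto
  next
    case False
    then show ?thesis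
      using count_start_exps_le[of y] p_ge m_ge n_ge by auto
  qed
  then show False
    using rhs_not_carry_free by (simp add: carry_free_def)
qed

lemma single_carry:
  obtains x where "add_mset (Suc x) lhs + replicate_mset p 2 = add_mset 3 rhs + replicate_mset p x"
proof -
  have "count (carry p 2 rhs) y < p" for y
  proof (cases "y = 0 \<or> y = 2")
    case True
    then show ?thesis
      using count_rhs_two s_less count_start_exps_le[of 2] count_le_size[of "start_exps H B" 0]
        size_start_exps_le p_ge m_ge by (auto simp: carry_def)
  next
    case False
    then show ?thesis
      using count_start_exps_le[of y] p_ge m_ge n_ge by (auto simp: carry_def)
  qed
  then have "carry_free p (carry p 2 rhs)"
    by (simp add: carry_free_def)
  then obtain x where "p \<le> count lhs x"
    "add_mset (Suc x) lhs + replicate_mset p 2 = add_mset (Suc 2) rhs + replicate_mset p x"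
    by (rule padic_sum_eq_single_carry[OF one_less_p size_lhs_eq_size_rhs padic_eq count_rhs_two])
  then show thesis
    by (intro that) simp
qed

lemma in_start_exps_if_not_carried:
  assumes "add_mset (Suc x) lhs + replicate_mset p 2 = add_mset 3 rhs + replicate_mset p x"
    and "v \<in># lhs" "v \<noteq> x" "v \<notin> {2, 3, Suc n, Suc m}"
  shows "v \<in># start_exps H B"
proof -
  from assms(2) have "v \<in># add_mset (Suc x) lhs + replicate_mset p 2"
    by (simp only: union_iff set_mset_add_mset_insert insert_iff simp_thms)
  then have "v \<in># add_mset 3 rhs + replicate_mset p x"
    by (simp only: assms(1))
  with assms(3,4) show ?thesis
    by (auto split: if_splits)
qed

lemma zeros_and_two_in_start_exps: "{#0, 0, 2#} \<subseteq># start_exps H B"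
proof -
  have "count (start_exps H B) 2 \<noteq> 0"
    using count_rhs_two s_less m_ge n_ge by simp
  then show ?thesis
    using count_start_exps_zero r_ge by (auto simp: subseteq_mset_def)
qed

lemma carry_at_n:
  assumes carried: "add_mset (Suc n) lhs + replicate_mset p 2 = add_mset 3 rhs + replicate_mset p n"
    and "{#0, 0, 2, m#} \<subseteq># start_exps H B"
  shows "r = 1 \<and> s = p - 1 \<and> (H, B, A) \<in> {g1 p m n, g2 p m n, g3 p m n, g4 p m n, g5 p m n, g6 p m n}"
proof -
  obtain a b c d where "B = {#}" "a < b" and H: "H = {(a, 0), (b, 0), (c, 2), (d, m)}"
    and S: "start_exps H B = {#0, 0, 2, m#}" and E: "end_exps H B = {#a, b, c + 2, d + m#}"
    using start_exps_shape[OF finite_H card_H assms(2)] by blast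
  have r: "r = 1"
    using count_start_exps_zero S r_ge m_ge by simp
  have s: "s = p - 1"
    using count_rhs_two S s_less m_ge n_ge by simp
  obtain q where q: "p = Suc q"
    using p_ge by (cases p) simp_all
  have "A + {#a, b, c + 2, d + m#} = add_mset (Suc m) (add_mset 3 (replicate_mset (p - 1) n))"
    using carried S E r s unfolding q by (simp add: add_mset_commute)
  moreover have "0 < c" "0 < d"
    using H_pos H by auto
  ultimately show ?thesis
    using carry_at_n_solutions \<open>a < b\<close> m_ge n_ge p_ge r s H \<open>B = {#}\<close> by simp
qed

lemma carry_at_m:
  assumes carried: "add_mset (Suc m) lhs + replicate_mset p 2 = add_mset 3 rhs + replicate_mset p m"
    and "{#0, 0, 2, n#} \<subseteq># start_exps H B"
  shows "r = 1 \<and> s = p - 1 \<and> (H, B, A) = g7 p m n"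
proof -
  obtain a b c d where "B = {#}" "a < b" and H: "H = {(a, 0), (b, 0), (c, 2), (d, n)}"
    and S: "start_exps H B = {#0, 0, 2, n#}" and E: "end_exps H B = {#a, b, c + 2, d + n#}"
    using start_exps_shape[OF finite_H card_H assms(2)] by blast
  have r: "r = 1"
    using count_start_exps_zero S r_ge m_ge n_ge by simp
  have s: "s = p - 1"
    using count_rhs_two S s_less m_ge n_ge by simp
  obtain q where q: "p = Suc q"
    using p_ge by (cases p) simp_all
  have "A + {#a, b, c + 2, d + n#} = add_mset (Suc n) (add_mset 3 (replicate_mset (p - 1) m))"
    using carried S E r s unfolding q by (simp add: add_mset_commute)
  moreover have "0 < c" "0 < d"
    using H_pos H by auto
  ultimately show ?thesis
    using carry_at_m_solution \<open>a < b\<close> m_ge n_ge p_ge r s H \<open>B = {#}\<close> by simp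
qed

lemma solutions:
  "r = 1 \<and> s = p - 1 \<and> (H, B, A) \<in> {g1 p m n, g2 p m n, g3 p m n, g4 p m n, g5 p m n, g6 p m n, g7 p m n}"
proof -
  obtain x
    where carried: "add_mset (Suc x) lhs + replicate_mset p 2 = add_mset 3 rhs + replicate_mset p x"
    by (rule single_carry)
  have n_in: "n \<in># start_exps H B" if "x \<noteq> n"
    using in_start_exps_if_not_carried[OF carried, of n] that m_ge n_ge by simp
  have m_in: "m \<in># start_exps H B" if "x \<noteq> m"
    using in_start_exps_if_not_carried[OF carried, of m] that m_ge n_ge by simp
  consider "x = n" | "x = m" | "x \<noteq> n" "x \<noteq> m"
    by blast
  then show ?thesis
  proof cases
    case 1
    then have "{#0, 0, 2, m#} \<subseteq># start_exps H B"
      using zeros_and_two_in_start_exps m_in m_ge n_ge by (auto simp: subseteq_mset_def split: if_splits)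
    then show ?thesis
      using carry_at_n carried 1 by auto
  next
    case 2
    then have "{#0, 0, 2, n#} \<subseteq># start_exps H B"
      using zeros_and_two_in_start_exps n_in m_ge n_ge by (auto simp: subseteq_mset_def split: if_splits)
    then show ?thesis
      using carry_at_m carried 2 by auto
  next
    case 3
    then have "{#0, 0, 2, m, n#} \<subseteq># start_exps H B"
      using zeros_and_two_in_start_exps n_in m_in m_ge n_ge
      by (auto simp: subseteq_mset_def split: if_splits)
    then show ?thesis
      using size_mset_mono size_start_exps_le by fastforce
  qed
qed

end

lemma E1_basis_memberI:
  assumes "5 \<le> p" "finite H" "\<forall>(i, j)\<in>H. 0 < i" "card H = 4" "size A = p - 3"
    and "padic_sum p (A + end_exps H {#} + {#n, m#} + replicate_mset 2 0)
      = padic_sum p ({#Suc n, Suc m#} + replicate_mset (p - 1) 2 + start_exps H {#})"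
  shows "(H, {#}, A) \<in> E1_basis p (p - 1 + 3 - 1)
    (2 * (p - 1) * (p ^ n + p ^ m + (p - 1) * p + (p - 1)) + (p - 1) - 1 - 1)"
proof -
  have "size A + 1 + 1 = p - 1"
    using assms(1,5) by simp
  then have "s_deg (H, {#}, A) = p - 1 + 3 - 1 \<and>
      t_deg p (H, {#}, A) = 2 * (p - 1) * (p ^ n + p ^ m + (p - 1) * p + (p - 1)) + (p - 1) - 1 - 1"
    using E1_bidegree_iff[of p "p - 1" 1 H "{#}" A n m] assms by (simp add: numeral_2_eq_2)
  then show ?thesis
    using assms(2,3) by (simp add: E1_basis_def valid_mono_def)
qed

lemma generators_in_E1_basis:
  assumes "5 \<le> p" "4 \<le> m" "m + 2 \<le> n"
  shows "{g1 p m n, g2 p m n, g3 p m n, g4 p m n, g5 p m n, g6 p m n, g7 p m n}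
    \<subseteq> E1_basis p (p - 1 + 3 - 1) (2 * (p - 1) * (p ^ n + p ^ m + (p - 1) * p + (p - 1)) + (p - 1) - 1 - 1)"
proof -
  obtain k where p: "p = k + 5"
    using assms(1) by (metis add.commute le_Suc_ex)
  have exps: "n - 2 + 2 = n" "m - 2 + 2 = m" "n - m + m = n" "m - 1 + 2 = Suc m"
    using assms(2,3) by simp_all
  show ?thesis
    unfolding g1_def g2_def g3_def g4_def g5_def g6_def g7_def
    by (intro insert_subsetI empty_subsetI E1_basis_memberI)
      (insert assms(2,3) exps, simp_all add: p start_exps_def end_exps_def algebra_simps power2_eq_square power3_eq_cube)
qed

lemma card_generators:
  assumes "4 \<le> m" "m + 2 \<le> n"
  shows "card {g1 p m n, g2 p m n, g3 p m n, g4 p m n, g5 p m n, g6 p m n, g7 p m n} = 7"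
proof -
  let ?gens = "[g1 p m n, g2 p m n, g3 p m n, g4 p m n, g5 p m n, g6 p m n, g7 p m n]"
  let ?signature = "\<lambda>(H, B, A). ((3, 0) \<in> H, (n, 0) \<in> H, (n - 2, 2) \<in> H, (1, m) \<in> H)"
  have "distinct (map ?signature ?gens)"
    using assms by (simp add: g1_def g2_def g3_def g4_def g5_def g6_def g7_def, arith)
  then have "distinct ?gens"
    by (simp only: distinct_map)
  then show ?thesis
    using distinct_card[of ?gens] by simp
qed

theorem lemma3p1:
  fixes p m n s r :: nat
  assumes "prime p" and "p \<ge> 5"
    and "n \<ge> m + 2" and "m + 2 > 5"
    and "2 \<le> s" and "s < p"
    and "1 \<le> r" and "r \<le> s + 3"
  shows "E1_basis p (s + 3 - r) (2*(p-1) * (p^n + p^m + s*p + s) + s - r - 1) =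
           (if r = 1 \<and> s = p - 1
            then {g1 p m n, g2 p m n, g3 p m n, g4 p m n, g5 p m n, g6 p m n, g7 p m n}
            else {})
       \<and> card {g1 p m n, g2 p m n, g3 p m n, g4 p m n, g5 p m n, g6 p m n, g7 p m n} = 7"
proof -
  have m: "4 \<le> m"
    using assms(4) by simp
  have "E1_basis p (s + 3 - r) (2*(p-1) * (p^n + p^m + s*p + s) + s - r - 1) =
      (if r = 1 \<and> s = p - 1
       then {g1 p m n, g2 p m n, g3 p m n, g4 p m n, g5 p m n, g6 p m n, g7 p m n} else {})"
  proof (intro equalityI subsetI)
    fix M
    assume "M \<in> E1_basis p (s + 3 - r) (2*(p-1) * (p^n + p^m + s*p + s) + s - r - 1)"
    then obtain H B A where M: "M = (H, B, A)" and "finite H" "\<forall>(i, j)\<in>H. 0 < i"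
      and "s_deg (H, B, A) = s + 3 - r \<and>
        t_deg p (H, B, A) = 2 * (p - 1) * (p ^ n + p ^ m + s * p + s) + s - r - 1"
      by (cases M) (auto simp: E1_basis_def valid_mono_def)
    then have "digit_equation p m n s r H B A"
      using E1_bidegree_iff[of p s r H B A n m] assms m by unfold_locales auto
    then have "r = 1 \<and> s = p - 1 \<and>
        (H, B, A) \<in> {g1 p m n, g2 p m n, g3 p m n, g4 p m n, g5 p m n, g6 p m n, g7 p m n}"
      by (rule digit_equation.solutions)
    then show "M \<in> (if r = 1 \<and> s = p - 1
        then {g1 p m n, g2 p m n, g3 p m n, g4 p m n, g5 p m n, g6 p m n, g7 p m n} else {})"
      using M by simp
  next
    fix M
    assume "M \<in> (if r = 1 \<and> s = p - 1
        then {g1 p m n, g2 p m n, g3 p m n, g4 p m n, g5 p m n, g6 p m n, g7 p m n} else {})"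
    then show "M \<in> E1_basis p (s + 3 - r) (2*(p-1) * (p^n + p^m + s*p + s) + s - r - 1)"
      using generators_in_E1_basis[OF assms(2) m assms(3)] by (auto split: if_splits)
  qed
  then show ?thesis
    using card_generators[OF m assms(3)] by blast
qed

end
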